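(* Let $G$ be a graph. Apply the following operations repeatedly until none is applicable: (1) if $v$ is a vertex of degree at most $2$ and $e$ an edge incident to $v$, contract $v$ along $e$; (2) if $v$ is an isolated vertex, delete $v$. The resulting graph is the (canonical) minor-3-core of $G$.
   Context: Graphs are simple and undirected. Contracting a vertex $u$ along an edge $\{u,v\}$ (i.e. to $v$) produces the graph with vertex set $V\setminus\{u\}$ and edge set consisting of all edges not incident to $u$ together with all edges $\{u',v\}$ with $u'\neq v$ and $\{u',u\}\in E$. A minor of $G$ is a graph obtained from $G$ by vertex contractions and subgraph operations; its vertices are (non-contracted) vertices of $G$. A minor-3-core of $G$ is a minor $H$ of $G$ with minimum degree at least $3$ such that no minor of $G$ with minimum degree at least $3$ has more edges than $H$. A vertex $v$ of a minor-3-core $C$ has the disjoint-paths property if, for its neighbours $u_1,\dots,u_{\Delta_C(v)}$ in $C$, there are paths in $G$ from $v$ to the $u_i$ pairwise sharing only $v$; the canonical minor-3-core is the minor-3-core in which every vertex has this property (it exists and is unique, and every minor-3-core is isomorphic to it). *)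

theory Defs
  imports Main
begin

type_synonym 'a graph = "'a set \<times> 'a set set"

definition verts :: "'a graph \<Rightarrow> 'a set" where "verts G = fst G"
definition edges :: "'a graph \<Rightarrow> 'a set set" where "edges G = snd G"

definition is_graph :: "'a graph \<Rightarrow> bool" where
  "is_graph G \<longleftrightarrow> finite (verts G) \<and>
     (\<forall>e \<in> edges G. \<exists>x y. x \<noteq> y \<and> x \<in> verts G \<and> y \<in> verts G \<and> e = {x, y})"

definition degree :: "'a graph \<Rightarrow> 'a \<Rightarrow> nat" where
  "degree G v = card {e \<in> edges G. v \<in> e}"

definition nbrs :: "'a graph \<Rightarrow> 'a \<Rightarrow> 'a set" where
  "nbrs G v = {u. {u, v} \<in> edges G}"

definition min_deg_ge3 :: "'a graph \<Rightarrow> bool" where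
  "min_deg_ge3 G \<longleftrightarrow> (\<forall>v \<in> verts G. degree G v \<ge> 3)"

definition contract :: "'a \<Rightarrow> 'a \<Rightarrow> 'a graph \<Rightarrow> 'a graph" where
  "contract u v G = (verts G - {u},
     {e \<in> edges G. u \<notin> e} \<union> {{u', v} | u'. u' \<noteq> v \<and> {u', u} \<in> edges G})"

definition subgraph :: "'a graph \<Rightarrow> 'a graph \<Rightarrow> bool" where
  "subgraph H G \<longleftrightarrow> verts H \<subseteq> verts G \<and> edges H \<subseteq> edges G \<and>
     (\<forall>e \<in> edges H. e \<subseteq> verts H)"

inductive minor :: "'a graph \<Rightarrow> 'a graph \<Rightarrow> bool" where
  minor_refl: "minor G G"
| minor_contract: "minor H G \<Longrightarrow> {u, v} \<in> edges H \<Longrightarrow> u \<noteq> v \<Longrightarrow> minor (contract u v H) G"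
| minor_subgraph: "minor H G \<Longrightarrow> subgraph H' H \<Longrightarrow> minor H' G"

definition minor_3_core :: "'a graph \<Rightarrow> 'a graph \<Rightarrow> bool" where
  "minor_3_core G H \<longleftrightarrow> minor H G \<and> min_deg_ge3 H \<and>
     (\<forall>H'. minor H' G \<and> min_deg_ge3 H' \<longrightarrow> card (edges H') \<le> card (edges H))"

definition is_path :: "'a graph \<Rightarrow> 'a list \<Rightarrow> 'a \<Rightarrow> 'a \<Rightarrow> bool" where
  "is_path G p x y \<longleftrightarrow> p \<noteq> [] \<and> hd p = x \<and> last p = y \<and> distinct p \<and>
     set p \<subseteq> verts G \<and> (\<forall>i. Suc i < length p \<longrightarrow> {p ! i, p ! Suc i} \<in> edges G)"

definition disjoint_paths_property :: "'a graph \<Rightarrow> 'a graph \<Rightarrow> 'a \<Rightarrow> bool" where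
  "disjoint_paths_property G C v \<longleftrightarrow>
     (\<exists>P. (\<forall>u \<in> nbrs C v. is_path G (P u) v u) \<and>
          (\<forall>u \<in> nbrs C v. \<forall>u' \<in> nbrs C v. u \<noteq> u' \<longrightarrow> set (P u) \<inter> set (P u') = {v}))"

definition canonical_minor_3_core :: "'a graph \<Rightarrow> 'a graph \<Rightarrow> bool" where
  "canonical_minor_3_core G C \<longleftrightarrow> minor_3_core G C \<and>
     (\<forall>v \<in> verts C. disjoint_paths_property G C v)"

inductive reduce_step :: "'a graph \<Rightarrow> 'a graph \<Rightarrow> bool" where
  contract_step: "v \<in> verts G \<Longrightarrow> degree G v \<le> 2 \<Longrightarrow> {v, w} \<in> edges G \<Longrightarrow> v \<noteq> w \<Longrightarrow>
     reduce_step G (contract v w G)"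
| delete_step: "v \<in> verts G \<Longrightarrow> (\<forall>e \<in> edges G. v \<notin> e) \<Longrightarrow>
     reduce_step G (verts G - {v}, edges G)"

end

theory Submission
  imports Defs
begin

text \<open>Both halves of the claim are invariants of the reduction. If M is a minor of G of minimum
  degree at least 3, fix a model of M in G by connected, pairwise disjoint branch sets. Deleting an
  isolated vertex does not affect it, and contracting a vertex v of degree at most 2 only removes v
  from the branch sets: no branch set equals {v}, since its vertex would then have degree at most 2,
  and the (at most two) neighbours of v become adjacent, which keeps branch sets connected and
  adjacent. So M is a minor of the reduced graph H and has at most as many edges. Conversely, a
  subdivision of the current graph always sits inside G: contracting a vertex of degree 2 concatenates
  the two paths through it. In H these paths give the disjoint paths, and H has minimum degree at
  least 3 because no reduction step applies to it.\<close>

section \<open>Paths\<close>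

lemma is_path_iff_successively:
  "is_path G p x y \<longleftrightarrow> p \<noteq> [] \<and> hd p = x \<and> last p = y \<and> distinct p \<and> set p \<subseteq> verts G \<and>
     successively (\<lambda>a b. {a, b} \<in> edges G) p"
  unfolding is_path_def successively_conv_nth ..

lemma is_path_rev: "is_path G p x y \<Longrightarrow> is_path G (rev p) y x"
  unfolding is_path_iff_successively by (auto simp: hd_rev last_rev insert_commute)

lemma is_path_ends: "is_path G p x y \<Longrightarrow> x \<in> set p \<and> y \<in> set p"
  unfolding is_path_def by auto

lemma is_path_reorient:
  assumes "is_path G p x y" "{a, b} = {x, y}"
  shows "\<exists>q. is_path G q a b \<and> set q = set p"
  using assms is_path_rev[OF assms(1)] by (metis doubleton_eq_iff set_rev)

lemma is_path_append:
  assumes "is_path G p x y" "is_path G q y z" "set p \<inter> set q = {y}"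
  shows "is_path G (p @ tl q) x z \<and> set (p @ tl q) = set p \<union> set q"
proof -
  obtain t where q: "q = y # t" using assms(2) unfolding is_path_def by (cases q) auto
  have p: "last p = y" "p \<noteq> []" using assms(1) unfolding is_path_def by auto
  have t: "distinct t" "y \<notin> set t" "set p \<inter> set t = {}" using assms(2,3) q unfolding is_path_def by auto
  have "successively (\<lambda>a b. {a, b} \<in> edges G) (p @ t)"
    using assms(1,2) p q unfolding is_path_iff_successively
    by (auto simp: successively_append_iff successively_Cons)
  moreover have "last (p @ t) = z" using assms(2) p q unfolding is_path_def by (cases "t = []") auto
  ultimately show ?thesis using assms p q t unfolding is_path_iff_successively by auto
qed

section \<open>Graphs, contraction and the reduction steps\<close>

lemma verts_pair [simp]: "verts (V, E) = V" and edges_pair [simp]: "edges (V, E) = E"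
  unfolding verts_def edges_def by simp_all

lemma verts_contract [simp]: "verts (contract v w G) = verts G - {v}"
  unfolding contract_def by simp

lemma edges_contract:
  "edges (contract v w G) = {e \<in> edges G. v \<notin> e} \<union> (\<lambda>u. {u, w}) ` (nbrs G v - {w})"
  unfolding contract_def nbrs_def by auto

lemma in_nbrs_iff: "u \<in> nbrs G v \<longleftrightarrow> {v, u} \<in> edges G"
  unfolding nbrs_def by (simp add: insert_commute)

lemma graph_edgeE:
  assumes "is_graph G" "e \<in> edges G"
  obtains x y where "e = {x, y}" "x \<noteq> y" "x \<in> verts G" "y \<in> verts G"
  using assms unfolding is_graph_def by blast

lemma graph_edge_ends:
  assumes "is_graph G" "{x, y} \<in> edges G"
  shows "x \<noteq> y \<and> x \<in> verts G \<and> y \<in> verts G"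
  using assms by (elim graph_edgeE) (auto simp: doubleton_eq_iff)

lemma graph_edge_subset: "is_graph G \<Longrightarrow> e \<in> edges G \<Longrightarrow> e \<subseteq> verts G"
  by (elim graph_edgeE) auto

lemma graph_finite_edges: "is_graph G \<Longrightarrow> finite (edges G)"
proof -
  assume G: "is_graph G"
  then have "edges G \<subseteq> Pow (verts G)" using graph_edge_subset by blast
  then show ?thesis using G finite_subset unfolding is_graph_def by blast
qed

lemma graph_nbrs_subset: "is_graph G \<Longrightarrow> nbrs G v \<subseteq> verts G - {v}"
  unfolding nbrs_def using graph_edge_ends by fastforce

lemma degree_eq_card_nbrs:
  assumes "is_graph G"
  shows "degree G v = card (nbrs G v)"
proof -
  have "bij_betw (\<lambda>u. {u, v}) (nbrs G v) {e \<in> edges G. v \<in> e}"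
  proof (rule bij_betw_imageI)
    show "inj_on (\<lambda>u. {u, v}) (nbrs G v)" by (rule inj_onI) (metis doubleton_eq_iff)
    have "e \<in> (\<lambda>u. {u, v}) ` nbrs G v" if "e \<in> edges G" "v \<in> e" for e
      using assms that by (elim graph_edgeE) (auto simp: nbrs_def insert_commute)
    moreover have "(\<lambda>u. {u, v}) ` nbrs G v \<subseteq> {e \<in> edges G. v \<in> e}"
      unfolding nbrs_def by blast
    ultimately show "(\<lambda>u. {u, v}) ` nbrs G v = {e \<in> edges G. v \<in> e}"
      by blast
  qed
  then show ?thesis unfolding degree_def by (simp add: bij_betw_same_card)
qed

lemma low_degree_nbrsE:
  assumes "is_graph G" "degree G v \<le> 2" "w \<in> nbrs G v"
  obtains "nbrs G v - {w} = {}" | u where "nbrs G v - {w} = {u}"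
proof (cases "nbrs G v - {w} = {}")
  case False
  then obtain u where u: "u \<in> nbrs G v - {w}" by blast
  have "finite (nbrs G v)"
    using finite_subset[OF graph_nbrs_subset[OF assms(1)]] assms(1) by (simp add: is_graph_def)
  moreover have "card (nbrs G v - {w}) \<le> Suc 0"
    using assms degree_eq_card_nbrs[OF assms(1), of v] by (simp add: card_Diff_singleton)
  ultimately have "\<forall>x \<in> nbrs G v - {w}. x = u"
    using u card_le_Suc0_iff_eq[of "nbrs G v - {w}"] by blast
  then have "nbrs G v - {w} = {u}"
    using u by blast
  then show thesis by (rule that(2))
qed (use that(1) in blast)

lemma contract_keeps_edge: "e \<in> edges G \<Longrightarrow> v \<notin> e \<Longrightarrow> e \<in> edges (contract v w G)"
  unfolding edges_contract by blast

lemma contract_joins_nbrs: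
  assumes "is_graph G" "degree G v \<le> 2" "w \<in> nbrs G v" "p \<in> nbrs G v" "q \<in> nbrs G v" "p \<noteq> q"
  shows "{p, q} \<in> edges (contract v w G)"
proof (cases rule: low_degree_nbrsE[OF assms(1-3)])
  case 1
  then have "p = w" "q = w" using assms(4,5) by blast+
  then show ?thesis using assms(6) by simp
next
  case (2 u)
  then have "p \<in> {u, w}" "q \<in> {u, w}" using assms(4,5) by blast+
  then have "{p, q} = {u, w}" using assms(6) by auto
  moreover have "u \<in> nbrs G v - {w}" using 2 by blast
  ultimately show ?thesis unfolding edges_contract by blast
qed

lemma is_graph_contract:
  assumes "is_graph G" "{v, w} \<in> edges G"
  shows "is_graph (contract v w G)"
  unfolding is_graph_def verts_contract
proof (intro conjI ballI)
  show "finite (verts G - {v})" using assms(1) by (simp add: is_graph_def)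
next
  fix e assume e: "e \<in> edges (contract v w G)"
  have w: "w \<in> verts G - {v}" using graph_edge_ends[OF assms] by blast
  have nbrs: "nbrs G v - {w} \<subseteq> verts G - {v}" using graph_nbrs_subset[OF assms(1)] by blast
  show "\<exists>x y. x \<noteq> y \<and> x \<in> verts G - {v} \<and> y \<in> verts G - {v} \<and> e = {x, y}"
  proof (cases "e \<in> edges G \<and> v \<notin> e")
    case True
    then obtain x y where "e = {x, y}" "x \<noteq> y" "x \<in> verts G" "y \<in> verts G"
      using assms(1) graph_edgeE by blast
    then show ?thesis using True by blast
  next
    case False
    then obtain u where "e = {u, w}" "u \<in> nbrs G v - {w}" using e unfolding edges_contract by blast
    then show ?thesis using w nbrs by blast
  qed
qed

lemma reduce_step_graph: "reduce_step G H \<Longrightarrow> is_graph G \<Longrightarrow> is_graph H"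
proof (induction rule: reduce_step.induct)
  case (contract_step v G w)
  then show ?case by (simp add: is_graph_contract)
next
  case (delete_step v G)
  have "\<exists>x y. x \<noteq> y \<and> x \<in> verts G - {v} \<and> y \<in> verts G - {v} \<and> e = {x, y}"
    if e: "e \<in> edges G" for e
  proof -
    obtain x y where "e = {x, y}" "x \<noteq> y" "x \<in> verts G" "y \<in> verts G"
      using graph_edgeE[OF delete_step(3) e] by blast
    then show ?thesis using delete_step(2) e by blast
  qed
  then show ?case using delete_step(3) unfolding is_graph_def by simp
qed

lemma reduce_step_minor: "reduce_step G H \<Longrightarrow> is_graph G \<Longrightarrow> minor G K \<Longrightarrow> minor H K"
proof (induction rule: reduce_step.induct)
  case (contract_step v G w)
  then show ?case by (simp add: minor_contract)
next
  case (delete_step v G)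
  then have "subgraph (verts G - {v}, edges G) G"
    unfolding subgraph_def using graph_edge_subset[OF delete_step(3)] delete_step(2) by auto
  then show ?case using delete_step(4) by (rule minor_subgraph[rotated])
qed

lemma reduce_terminal_min_deg:
  assumes "is_graph H" "\<not> (\<exists>H'. reduce_step H H')"
  shows "min_deg_ge3 H"
  unfolding min_deg_ge3_def
proof (rule ballI, rule ccontr)
  fix v assume v: "v \<in> verts H" and "\<not> 3 \<le> degree H v"
  then have deg: "degree H v \<le> 2" by simp
  show False
  proof (cases "nbrs H v = {}")
    case True
    then have "\<forall>e \<in> edges H. v \<notin> e"
      using assms(1) by (auto elim!: graph_edgeE simp: nbrs_def insert_commute)
    then show False using assms(2) delete_step[OF v] by blast
  next
    case False
    then obtain w where "{v, w} \<in> edges H" by (auto simp: in_nbrs_iff)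
    moreover then have "v \<noteq> w" using graph_edge_ends[OF assms(1)] by blast
    ultimately show False using assms(2) contract_step[OF v deg] by blast
  qed
qed

section \<open>Connected vertex sets\<close>

definition adj_in :: "'a graph \<Rightarrow> 'a set \<Rightarrow> 'a \<Rightarrow> 'a \<Rightarrow> bool" where
  "adj_in G S x y \<longleftrightarrow> x \<in> S \<and> y \<in> S \<and> {x, y} \<in> edges G"

definition connected_in :: "'a graph \<Rightarrow> 'a set \<Rightarrow> bool" where
  "connected_in G S \<longleftrightarrow> (\<forall>x \<in> S. \<forall>y \<in> S. (adj_in G S)\<^sup>*\<^sup>* x y)"

lemma connected_inI:
  assumes "a \<in> S" "\<And>x. x \<in> S \<Longrightarrow> (adj_in G S)\<^sup>*\<^sup>* a x"
  shows "connected_in G S"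
proof -
  have "symp (adj_in G S)" by (auto intro!: sympI simp: adj_in_def insert_commute)
  then have "symp (adj_in G S)\<^sup>*\<^sup>*" by (rule symp_rtranclp)
  then show ?thesis unfolding connected_in_def using assms by (meson sympD rtranclp_trans)
qed

lemma adj_in_rtranclp_mono: "(adj_in G S)\<^sup>*\<^sup>* x y \<Longrightarrow> S \<subseteq> T \<Longrightarrow> (adj_in G T)\<^sup>*\<^sup>* x y"
  by (erule mono_rtranclp[rule_format, rotated]) (auto simp: adj_in_def)

lemma connected_in_union:
  assumes "connected_in G S" "connected_in G T" "a \<in> S" "b \<in> T" "{a, b} \<in> edges G"
  shows "connected_in G (S \<union> T)"
proof (rule connected_inI)
  let ?R = "adj_in G (S \<union> T)"
  fix x assume "x \<in> S \<union> T"
  then show "?R\<^sup>*\<^sup>* a x"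
  proof
    assume "x \<in> S"
    then have "(adj_in G S)\<^sup>*\<^sup>* a x" using assms(1,3) unfolding connected_in_def by blast
    then show ?thesis by (rule adj_in_rtranclp_mono) blast
  next
    assume "x \<in> T"
    then have "(adj_in G T)\<^sup>*\<^sup>* b x" using assms(2,4) unfolding connected_in_def by blast
    then have "?R\<^sup>*\<^sup>* b x" by (rule adj_in_rtranclp_mono) blast
    moreover have "?R a b" using assms(3-5) by (simp add: adj_in_def)
    ultimately show ?thesis by (rule converse_rtranclp_into_rtranclp[rotated])
  qed
qed (use assms(3) in blast)

lemma connected_in_nbrE:
  assumes "is_graph G" "connected_in G S" "v \<in> S" "S \<noteq> {v}"
  obtains p where "p \<in> S - {v}" "p \<in> nbrs G v"
proof -
  obtain q where "q \<in> S" "q \<noteq> v" using assms(3,4) by blast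
  then have "(adj_in G S)\<^sup>*\<^sup>* v q" using assms(2,3) unfolding connected_in_def by blast
  then obtain p where "adj_in G S v p" using \<open>q \<noteq> v\<close> by (auto elim: converse_rtranclpE)
  moreover then have "p \<noteq> v" using graph_edge_ends[OF assms(1)] by (auto simp: adj_in_def)
  ultimately have "p \<in> S - {v}" "p \<in> nbrs G v" by (auto simp: adj_in_def in_nbrs_iff)
  then show thesis by (rule that)
qed

lemma adj_in_contract_rtranclp:
  assumes G: "is_graph G" "degree G v \<le> 2" "w \<in> nbrs G v"
    and "(adj_in G S)\<^sup>*\<^sup>* a x" "a \<in> S - {v}"
  shows "\<exists>c \<in> S - {v}. (adj_in (contract v w G) (S - {v}))\<^sup>*\<^sup>* a c \<and> (c = x \<or> x = v \<and> c \<in> nbrs G v)"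
  using assms(4)
proof (induction rule: rtranclp_induct)
  case base
  then show ?case using assms(5) by blast
next
  case (step x y)
  let ?R = "adj_in (contract v w G) (S - {v})"
  obtain c where c: "c \<in> S - {v}" "?R\<^sup>*\<^sup>* a c" "c = x \<or> x = v \<and> c \<in> nbrs G v"
    using step.IH by blast
  have xy: "y \<in> S" "{x, y} \<in> edges G" "x \<noteq> y"
    using step(2) graph_edge_ends[OF G(1)] by (auto simp: adj_in_def)
  show ?case
  proof (cases "y = v")
    case True
    then have "c \<in> nbrs G v" using c(3) xy(2,3) by (auto simp: nbrs_def)
    then show ?thesis using c(1,2) True by blast
  next
    case False
    have "c = y \<or> {c, y} \<in> edges (contract v w G)"
    proof (cases "c = x")
      case True
      then have "v \<notin> {c, y}" using c(1) False by blast
      then show ?thesis using xy(2) \<open>c = x\<close> by (simp add: contract_keeps_edge)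
    next
      case False
      then have "c \<in> nbrs G v" "y \<in> nbrs G v" using c(3) xy(2) by (auto simp: in_nbrs_iff)
      then show ?thesis using contract_joins_nbrs[OF G] by blast
    qed
    then have "c = y \<or> ?R c y" using c(1) xy(1) False by (auto simp: adj_in_def)
    then show ?thesis using c(1,2) xy(1) False by (metis DiffI rtranclp.rtrancl_into_rtrancl singletonD)
  qed
qed

lemma connected_in_contract:
  assumes G: "is_graph G" "degree G v \<le> 2" "w \<in> nbrs G v"
    and S: "connected_in G S" "S - {v} \<noteq> {}"
  shows "connected_in (contract v w G) (S - {v})"
proof -
  obtain a where a: "a \<in> S - {v}" using S(2) by blast
  show ?thesis
  proof (rule connected_inI[OF a])
    fix x assume x: "x \<in> S - {v}"
    then have "(adj_in G S)\<^sup>*\<^sup>* a x" using S(1) a unfolding connected_in_def by blast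
    then show "(adj_in (contract v w G) (S - {v}))\<^sup>*\<^sup>* a x"
      using adj_in_contract_rtranclp[OF G _ a] x by blast
  qed
qed

section \<open>Minor models\<close>

text \<open>The branch-set description of minors: B x is the branch set of the vertex x of M.
  Unlike the relation minor, it can be transported along reduction steps of G.\<close>

definition minor_model :: "'a graph \<Rightarrow> 'a graph \<Rightarrow> ('a \<Rightarrow> 'a set) \<Rightarrow> bool" where
  "minor_model M G B \<longleftrightarrow>
     (\<forall>x \<in> verts M. B x \<noteq> {} \<and> connected_in G (B x)) \<and>
     (\<forall>x \<in> verts M. \<forall>y \<in> verts M. x \<noteq> y \<longrightarrow> B x \<inter> B y = {}) \<and>
     (\<forall>e \<in> edges M. \<exists>x y. e = {x, y} \<and> x \<noteq> y \<and> x \<in> verts M \<and> y \<in> verts M \<and>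
        (\<exists>a \<in> B x. \<exists>b \<in> B y. {a, b} \<in> edges G))"

lemma minor_modelI:
  assumes "\<And>x. x \<in> verts M \<Longrightarrow> B x \<noteq> {} \<and> connected_in G (B x)"
    and "\<And>x y. x \<in> verts M \<Longrightarrow> y \<in> verts M \<Longrightarrow> x \<noteq> y \<Longrightarrow> B x \<inter> B y = {}"
    and "\<And>e. e \<in> edges M \<Longrightarrow> \<exists>x y. e = {x, y} \<and> x \<noteq> y \<and> x \<in> verts M \<and> y \<in> verts M \<and>
           (\<exists>a \<in> B x. \<exists>b \<in> B y. {a, b} \<in> edges G)"
  shows "minor_model M G B"
  unfolding minor_model_def using assms by simp

lemma minor_model_branch:
  "minor_model M G B \<Longrightarrow> x \<in> verts M \<Longrightarrow> B x \<noteq> {} \<and> connected_in G (B x)"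
  by (simp add: minor_model_def)

lemma minor_model_disjoint:
  "minor_model M G B \<Longrightarrow> x \<in> verts M \<Longrightarrow> y \<in> verts M \<Longrightarrow> x \<noteq> y \<Longrightarrow> B x \<inter> B y = {}"
  unfolding minor_model_def by blast

lemma minor_model_edgeE:
  assumes "minor_model M G B" "e \<in> edges M"
  obtains x y a b where "e = {x, y}" "x \<noteq> y" "x \<in> verts M" "y \<in> verts M"
    "a \<in> B x" "b \<in> B y" "{a, b} \<in> edges G"
proof -
  have "\<exists>x y. e = {x, y} \<and> x \<noteq> y \<and> x \<in> verts M \<and> y \<in> verts M \<and>
      (\<exists>a \<in> B x. \<exists>b \<in> B y. {a, b} \<in> edges G)"
    using assms(1)[unfolded minor_model_def, THEN conjunct2, THEN conjunct2] assms(2) by (rule bspec)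
  then show thesis using that by blast
qed

lemma minor_model_edge:
  assumes "minor_model M G B" "{x, y} \<in> edges M"
  shows "x \<noteq> y \<and> x \<in> verts M \<and> y \<in> verts M \<and> (\<exists>a \<in> B x. \<exists>b \<in> B y. {a, b} \<in> edges G)"
proof -
  obtain x' y' a b where xy: "{x, y} = {x', y'}" "x' \<noteq> y'" "x' \<in> verts M" "y' \<in> verts M"
    and ab: "a \<in> B x'" "b \<in> B y'" "{a, b} \<in> edges G"
    by (rule minor_model_edgeE[OF assms])
  from xy(1) consider "x = x'" "y = y'" | "x = y'" "y = x'" by (auto simp: doubleton_eq_iff)
  then show ?thesis
  proof cases
    case 1
    then show ?thesis using xy ab by blast
  next
    case 2
    moreover have "{b, a} \<in> edges G" using ab(3) by (simp add: insert_commute)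
    ultimately show ?thesis using xy ab by blast
  qed
qed

lemma minor_model_refl:
  assumes "is_graph G"
  shows "minor_model G G (\<lambda>x. {x})"
proof -
  have "\<exists>x y. e = {x, y} \<and> x \<noteq> y \<and> x \<in> verts G \<and> y \<in> verts G \<and> {x, y} \<in> edges G"
    if "e \<in> edges G" for e
    using graph_edgeE[OF assms that] that by metis
  then show ?thesis unfolding minor_model_def connected_in_def by auto
qed

lemma minor_model_contract:
  assumes M: "minor_model H G B" and uv: "{u, v} \<in> edges H"
  shows "minor_model (contract u v H) G (B(v := B u \<union> B v))"
proof -
  define B' where "B' = B(v := B u \<union> B v)"
  have ends: "u \<noteq> v" "u \<in> verts H" "v \<in> verts H" and link: "\<exists>a \<in> B u. \<exists>b \<in> B v. {a, b} \<in> edges G"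
    using minor_model_edge[OF M uv] by blast+
  note branch = minor_model_branch[OF M] and disj = minor_model_disjoint[OF M]
  obtain a b where ab: "a \<in> B u" "b \<in> B v" "{a, b} \<in> edges G" using link by blast
  have "connected_in G (B u \<union> B v)"
    by (rule connected_in_union[OF _ _ ab]) (use branch ends in blast)+
  then have "B' x \<noteq> {} \<and> connected_in G (B' x)" if "x \<in> verts (contract u v H)" for x
    using that branch[of x] ab(1) by (auto simp: B'_def)
  moreover have "B' x \<inter> B' y = {}"
    if "x \<in> verts (contract u v H)" "y \<in> verts (contract u v H)" "x \<noteq> y" for x y
    using that disj[of u y] disj[of v y] disj[of x u] disj[of x v] disj[of x y] ends
    by (auto simp: B'_def Int_Un_distrib Int_Un_distrib2)
  moreover have "\<exists>x y. e = {x, y} \<and> x \<noteq> y \<and> x \<in> verts (contract u v H) \<and>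
      y \<in> verts (contract u v H) \<and> (\<exists>a \<in> B' x. \<exists>b \<in> B' y. {a, b} \<in> edges G)"
    if e: "e \<in> edges (contract u v H)" for e
  proof (cases "e \<in> edges H \<and> u \<notin> e")
    case True
    then obtain x y a b where xy: "e = {x, y}" "x \<noteq> y" "x \<in> verts H" "y \<in> verts H"
      and "a \<in> B x" "b \<in> B y" and ab: "{a, b} \<in> edges G"
      using minor_model_edgeE[OF M] by blast
    then have "a \<in> B' x" "b \<in> B' y" "x \<in> verts (contract u v H)" "y \<in> verts (contract u v H)"
      using True by (auto simp: B'_def)
    then show ?thesis using xy(1,2) ab by blast
  next
    case False
    then obtain x where x: "e = {x, v}" "x \<in> nbrs H u - {v}" using e unfolding edges_contract by blast
    then obtain a b where "x \<noteq> u" "x \<in> verts H" "a \<in> B x" "b \<in> B u" and ab: "{a, b} \<in> edges G"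
      using minor_model_edge[OF M, of x u] by (auto simp: nbrs_def)
    then have "a \<in> B' x" "b \<in> B' v" "x \<in> verts (contract u v H)" "v \<in> verts (contract u v H)"
      "x \<noteq> v" using x ends by (auto simp: B'_def)
    then show ?thesis using x(1) ab by blast
  qed
  ultimately have "minor_model (contract u v H) G B'" by (rule minor_modelI)
  then show ?thesis by (simp add: B'_def)
qed

lemma minor_model_subgraph:
  assumes M: "minor_model H G B" and "subgraph H' H"
  shows "minor_model H' G B"
proof (rule minor_modelI)
  have sub: "verts H' \<subseteq> verts H" "edges H' \<subseteq> edges H" "\<And>e. e \<in> edges H' \<Longrightarrow> e \<subseteq> verts H'"
    using assms(2) unfolding subgraph_def by auto
  show "B x \<noteq> {} \<and> connected_in G (B x)" if "x \<in> verts H'" for x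
    using minor_model_branch[OF M] sub(1) that by blast
  show "B x \<inter> B y = {}" if "x \<in> verts H'" "y \<in> verts H'" "x \<noteq> y" for x y
    using that sub(1) by (intro minor_model_disjoint[OF M]) auto
  fix e assume e: "e \<in> edges H'"
  then have "e \<in> edges H" using sub(2) by blast
  then obtain x y a b where xy: "e = {x, y}" "x \<noteq> y" "a \<in> B x" "b \<in> B y" "{a, b} \<in> edges G"
    by (rule minor_model_edgeE[OF M])
  moreover have "x \<in> verts H'" "y \<in> verts H'" using sub(3)[OF e] xy(1) by auto
  ultimately show "\<exists>x y. e = {x, y} \<and> x \<noteq> y \<and> x \<in> verts H' \<and> y \<in> verts H' \<and>
      (\<exists>a \<in> B x. \<exists>b \<in> B y. {a, b} \<in> edges G)" by blast
qed

lemma minor_imp_minor_model: "minor H G \<Longrightarrow> is_graph G \<Longrightarrow> \<exists>B. minor_model H G B"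
proof (induction rule: minor.induct)
  case (minor_refl G)
  then show ?case using minor_model_refl by blast
next
  case (minor_contract H G u v)
  then obtain B where "minor_model H G B" by blast
  then show ?case using minor_model_contract[OF _ minor_contract(2)] by blast
next
  case (minor_subgraph H G H')
  then obtain B where "minor_model H G B" by blast
  then show ?case using minor_model_subgraph[OF _ minor_subgraph(2)] by blast
qed

lemma minor_model_edge_map:
  assumes M: "minor_model M G B"
  obtains r where "\<And>e. e \<in> edges M \<Longrightarrow> r e \<in> edges G" and "inj_on r (edges M)"
    and "\<And>e x. e \<in> edges M \<Longrightarrow> x \<in> e \<Longrightarrow> r e \<inter> B x \<noteq> {}"
proof -
  have "\<exists>h. h \<in> edges G \<and> e = {z \<in> verts M. h \<inter> B z \<noteq> {}}" if e: "e \<in> edges M" for e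
  proof -
    obtain x y a b where xy: "e = {x, y}" "x \<noteq> y" "x \<in> verts M" "y \<in> verts M"
      and ab: "a \<in> B x" "b \<in> B y" "{a, b} \<in> edges G"
      using minor_model_edgeE[OF M e] by blast
    have "z = x \<or> z = y" if "z \<in> verts M" "{a, b} \<inter> B z \<noteq> {}" for z
      using that xy(3,4) ab(1,2) minor_model_disjoint[OF M, of z x] minor_model_disjoint[OF M, of z y]
      by blast
    then have "e = {z \<in> verts M. {a, b} \<inter> B z \<noteq> {}}" using xy ab by auto
    then show ?thesis using ab(3) by blast
  qed
  then obtain r where r: "\<And>e. e \<in> edges M \<Longrightarrow> r e \<in> edges G"
    and inv: "\<And>e. e \<in> edges M \<Longrightarrow> e = {z \<in> verts M. r e \<inter> B z \<noteq> {}}"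
    by metis
  have inj: "inj_on r (edges M)"
  proof (rule inj_onI)
    fix e e' assume "e \<in> edges M" "e' \<in> edges M" "r e = r e'"
    then show "e = e'" using inv[of e] inv[of e'] by simp
  qed
  have "r e \<inter> B x \<noteq> {}" if "e \<in> edges M" "x \<in> e" for e x
    using that(2) by (subst (asm) inv[OF that(1)]) simp
  then show thesis using that[OF r inj] by blast
qed

lemma minor_model_card_edges:
  assumes "is_graph G" "minor_model M G B"
  shows "card (edges M) \<le> card (edges G)"
proof -
  obtain r where "\<And>e. e \<in> edges M \<Longrightarrow> r e \<in> edges G" "inj_on r (edges M)"
    by (metis minor_model_edge_map[OF assms(2)])
  then show ?thesis using graph_finite_edges[OF assms(1)] by (intro card_inj_on_le) auto
qed

lemma minor_model_degree:
  assumes "is_graph G" "minor_model M G B" "x \<in> verts M" "B x = {v}"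
  shows "degree M x \<le> degree G v"
proof -
  obtain r where r: "\<And>e. e \<in> edges M \<Longrightarrow> r e \<in> edges G" and inj: "inj_on r (edges M)"
    and meets: "\<And>e. e \<in> edges M \<Longrightarrow> x \<in> e \<Longrightarrow> r e \<inter> B x \<noteq> {}"
    by (metis minor_model_edge_map[OF assms(2)])
  have "inj_on r {e \<in> edges M. x \<in> e}" using inj by (rule inj_on_subset) blast
  moreover have "r e \<in> {h \<in> edges G. v \<in> h}" if "e \<in> edges M" "x \<in> e" for e
    using r[OF that(1)] meets[OF that] assms(4) by auto
  ultimately show ?thesis unfolding degree_def using graph_finite_edges[OF assms(1)]
    by (intro card_inj_on_le) auto
qed

lemma contract_keeps_link:
  assumes G: "is_graph G" "degree G v \<le> 2" "w \<in> nbrs G v"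
    and S: "connected_in G S" "S \<noteq> {v}" and T: "connected_in G T" "T \<noteq> {v}"
    and ST: "S \<inter> T = {}" "a \<in> S" "b \<in> T" "{a, b} \<in> edges G"
  shows "\<exists>a' \<in> S - {v}. \<exists>b' \<in> T - {v}. {a', b'} \<in> edges (contract v w G)"
proof -
  have reroute: "\<exists>p \<in> U - {v}. {p, c} \<in> edges (contract v w G)"
    if U: "connected_in G U" "U \<noteq> {v}" "v \<in> U" "c \<notin> U" "c \<in> nbrs G v" for U c
  proof -
    obtain p where "p \<in> U - {v}" "p \<in> nbrs G v" by (rule connected_in_nbrE[OF G(1) U(1,3,2)])
    moreover then have "p \<noteq> c" using U(4) by blast
    ultimately show ?thesis using contract_joins_nbrs[OF G] U(5) by blast
  qed
  have ab: "a \<noteq> b" using graph_edge_ends[OF G(1) ST(4)] by blast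
  consider "a = v" | "b = v" | "a \<noteq> v" "b \<noteq> v" by blast
  then show ?thesis
  proof cases
    case 1
    then have "b \<notin> S" "b \<in> nbrs G v" using ST by (auto simp: in_nbrs_iff)
    then obtain p where "p \<in> S - {v}" "{p, b} \<in> edges (contract v w G)"
      using reroute[OF S] ST(2) 1 by blast
    then show ?thesis using ST(3) ab 1 by blast
  next
    case 2
    then have "a \<notin> T" "a \<in> nbrs G v" using ST by (auto simp: nbrs_def)
    then obtain p where "p \<in> T - {v}" "{p, a} \<in> edges (contract v w G)"
      using reroute[OF T] ST(3) 2 by blast
    then show ?thesis using ST(2) ab 2 by (metis DiffI insert_commute singletonD)
  next
    case 3
    then show ?thesis using ST(2-4) contract_keeps_edge[of "{a, b}" G v w] by blast
  qed
qed

lemma minor_model_contract_low_degree: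
  assumes G: "is_graph G" "degree G v \<le> 2" "w \<in> nbrs G v"
    and M: "minor_model M G B" "min_deg_ge3 M"
  shows "minor_model M (contract v w G) (\<lambda>x. B x - {v})"
proof (rule minor_modelI)
  have not_v: "B x \<noteq> {v}" if "x \<in> verts M" for x
    using minor_model_degree[OF G(1) M(1) that] M(2) G(2) that unfolding min_deg_ge3_def by fastforce
  note branch = minor_model_branch[OF M(1)]
  show "B x - {v} \<noteq> {} \<and> connected_in (contract v w G) (B x - {v})" if "x \<in> verts M" for x
  proof -
    have "B x - {v} \<noteq> {}" using branch[OF that] not_v[OF that] by blast
    then show ?thesis using connected_in_contract[OF G] branch[OF that] by blast
  qed
  show "(B x - {v}) \<inter> (B y - {v}) = {}" if "x \<in> verts M" "y \<in> verts M" "x \<noteq> y" for x y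
    using minor_model_disjoint[OF M(1) that] by blast
  fix e assume "e \<in> edges M"
  then obtain x y a b where xy: "e = {x, y}" "x \<noteq> y" "x \<in> verts M" "y \<in> verts M"
    and ab: "a \<in> B x" "b \<in> B y" "{a, b} \<in> edges G"
    by (rule minor_model_edgeE[OF M(1)])
  have "\<exists>a' \<in> B x - {v}. \<exists>b' \<in> B y - {v}. {a', b'} \<in> edges (contract v w G)"
    using contract_keeps_link[OF G _ not_v[OF xy(3)] _ not_v[OF xy(4)] _ ab]
      branch[OF xy(3)] branch[OF xy(4)] minor_model_disjoint[OF M(1) xy(3,4,2)] by blast
  then show "\<exists>x y. e = {x, y} \<and> x \<noteq> y \<and> x \<in> verts M \<and> y \<in> verts M \<and>
      (\<exists>a \<in> B x - {v}. \<exists>b \<in> B y - {v}. {a, b} \<in> edges (contract v w G))"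
    using xy by blast
qed

lemma minor_model_cong_edges:
  assumes "edges H = edges G"
  shows "minor_model M H B \<longleftrightarrow> minor_model M G B"
proof -
  have "adj_in H = adj_in G" using assms by (simp add: adj_in_def fun_eq_iff)
  then show ?thesis using assms by (simp add: minor_model_def connected_in_def)
qed

lemma reduce_step_minor_model:
  assumes "reduce_step G H" "is_graph G" "minor_model M G B" "min_deg_ge3 M"
  shows "\<exists>B'. minor_model M H B'"
  using assms
proof (induction rule: reduce_step.induct)
  case (contract_step v G w)
  then have "w \<in> nbrs G v" by (simp add: in_nbrs_iff)
  then show ?case using minor_model_contract_low_degree[OF contract_step(5,2) _ contract_step(6,7)] by blast
next
  case (delete_step v G)
  then have "minor_model M (verts G - {v}, edges G) B"
    using minor_model_cong_edges[of "(verts G - {v}, edges G)" G] by simp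
  then show ?case by blast
qed

lemma reduce_steps_graph: "reduce_step\<^sup>*\<^sup>* G H \<Longrightarrow> is_graph G \<Longrightarrow> is_graph H"
  by (induction rule: rtranclp_induct) (auto intro: reduce_step_graph)

lemma reduce_steps_minor: "reduce_step\<^sup>*\<^sup>* G H \<Longrightarrow> is_graph G \<Longrightarrow> minor H G"
proof (induction rule: rtranclp_induct)
  case base
  show ?case by (rule minor_refl)
next
  case (step K K')
  then show ?case using reduce_step_minor reduce_steps_graph by blast
qed

lemma reduce_steps_minor_model:
  assumes "reduce_step\<^sup>*\<^sup>* G H" "is_graph G" "minor_model M G B" "min_deg_ge3 M"
  shows "\<exists>B'. minor_model M H B'"
  using assms(1)
proof (induction rule: rtranclp_induct)
  case base
  then show ?case using assms(3) by blast
next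
  case (step K K')
  then obtain B' where "minor_model M K B'" by blast
  then show ?case
    using reduce_step_minor_model[OF step(2) reduce_steps_graph[OF step(1) assms(2)] _ assms(4)] by blast
qed

lemma reduce_steps_maximal:
  assumes "is_graph G" "reduce_step\<^sup>*\<^sup>* G H" "minor M G" "min_deg_ge3 M"
  shows "card (edges M) \<le> card (edges H)"
proof -
  obtain B where "minor_model M G B" using minor_imp_minor_model[OF assms(3,1)] by blast
  then obtain B' where "minor_model M H B'" using reduce_steps_minor_model[OF assms(2,1) _ assms(4)] by blast
  then show ?thesis using minor_model_card_edges reduce_steps_graph[OF assms(2,1)] by blast
qed

section \<open>Subdivisions inside G\<close>

text \<open>P embeds a subdivision of K into G: the edge e becomes the path P e of G, whose interior
  set (P e) - e avoids the vertices of K and the interiors of all other paths.\<close>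

definition path_system :: "'a graph \<Rightarrow> 'a graph \<Rightarrow> ('a set \<Rightarrow> 'a list) \<Rightarrow> bool" where
  "path_system G K P \<longleftrightarrow>
     (\<forall>e \<in> edges K. (\<exists>x y. e = {x, y} \<and> is_path G (P e) x y) \<and> (set (P e) - e) \<inter> verts K = {}) \<and>
     (\<forall>e \<in> edges K. \<forall>e' \<in> edges K. e \<noteq> e' \<longrightarrow> (set (P e) - e) \<inter> (set (P e') - e') = {})"

lemma path_systemI:
  assumes "\<And>e. e \<in> edges K \<Longrightarrow> \<exists>x y. e = {x, y} \<and> is_path G (P e) x y"
    and "\<And>e. e \<in> edges K \<Longrightarrow> (set (P e) - e) \<inter> verts K = {}"
    and "\<And>e e'. e \<in> edges K \<Longrightarrow> e' \<in> edges K \<Longrightarrow> e \<noteq> e' \<Longrightarrow> (set (P e) - e) \<inter> (set (P e') - e') = {}"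
  shows "path_system G K P"
  unfolding path_system_def using assms by blast

lemma path_system_path:
  "path_system G K P \<Longrightarrow> e \<in> edges K \<Longrightarrow> \<exists>x y. e = {x, y} \<and> is_path G (P e) x y"
  unfolding path_system_def by blast

lemma path_system_interior:
  "path_system G K P \<Longrightarrow> e \<in> edges K \<Longrightarrow> (set (P e) - e) \<inter> verts K = {}"
  unfolding path_system_def by blast

lemma path_system_interiors_disjoint:
  "path_system G K P \<Longrightarrow> e \<in> edges K \<Longrightarrow> e' \<in> edges K \<Longrightarrow> e \<noteq> e' \<Longrightarrow>
     (set (P e) - e) \<inter> (set (P e') - e') = {}"
  unfolding path_system_def by blast

lemma path_system_oriented_path:
  assumes "path_system G K P" "{x, y} \<in> edges K"
  obtains p where "is_path G p x y" "set p = set (P {x, y})"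
  using path_system_path[OF assms] is_path_reorient by metis

lemma path_system_inter:
  assumes K: "is_graph K" "path_system G K P" and e: "e \<in> edges K" "e' \<in> edges K" "e \<noteq> e'"
  shows "set (P e) \<inter> set (P e') = e \<inter> e'"
proof -
  have ends: "f \<subseteq> set (P f)" if f: "f \<in> edges K" for f
  proof -
    obtain x y where "f = {x, y}" "is_path G (P f) x y" using path_system_path[OF K(2) f] by blast
    then show ?thesis using is_path_ends by simp
  qed
  have "z \<in> f" if "z \<in> set (P f)" "z \<in> set (P f')" "f \<in> edges K" "f' \<in> edges K" "f \<noteq> f'" for z f f'
  proof (rule ccontr)
    assume "z \<notin> f"
    then have "z \<notin> verts K" using path_system_interior[OF K(2) that(3)] that(1) by blast
    then have "z \<notin> f'" using graph_edge_subset[OF K(1) that(4)] by blast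
    then show False
      using path_system_interiors_disjoint[OF K(2) that(3-5)] that(1,2) \<open>z \<notin> f\<close> by blast
  qed
  then show ?thesis using ends[OF e(1)] ends[OF e(2)] e by blast
qed

lemma path_system_refl:
  assumes "is_graph G"
  shows "\<exists>P. path_system G G P"
proof -
  have "\<exists>p. (\<exists>x y. e = {x, y} \<and> is_path G p x y) \<and> set p = e" if e: "e \<in> edges G" for e
  proof -
    obtain x y where "e = {x, y}" "x \<noteq> y" "x \<in> verts G" "y \<in> verts G"
      using graph_edgeE[OF assms e] by blast
    then have "is_path G [x, y] x y \<and> set [x, y] = e" using e by (simp add: is_path_iff_successively)
    then show ?thesis using \<open>e = {x, y}\<close> by blast
  qed
  then obtain P where path: "\<And>e. e \<in> edges G \<Longrightarrow> \<exists>x y. e = {x, y} \<and> is_path G (P e) x y"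
    and set: "\<And>e. e \<in> edges G \<Longrightarrow> set (P e) = e"
    by metis
  have "path_system G G P" by (rule path_systemI) (simp_all add: path set)
  then show ?thesis by blast
qed

lemma path_system_restrict:
  assumes "path_system G K P" "verts K' \<subseteq> verts K" "edges K' \<subseteq> edges K"
  shows "path_system G K' P"
proof (rule path_systemI)
  fix e assume "e \<in> edges K'"
  then have e: "e \<in> edges K" using assms(3) by blast
  show "\<exists>x y. e = {x, y} \<and> is_path G (P e) x y" by (rule path_system_path[OF assms(1) e])
  show "(set (P e) - e) \<inter> verts K' = {}" using path_system_interior[OF assms(1) e] assms(2) by blast
next
  fix e e' assume "e \<in> edges K'" "e' \<in> edges K'" "e \<noteq> e'"
  then show "(set (P e) - e) \<inter> (set (P e') - e') = {}"
    using path_system_interiors_disjoint[OF assms(1)] assms(3) by blast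
qed

lemma path_system_replace:
  assumes P: "path_system G K P" and K': "verts K' \<subseteq> verts K" "edges K' \<subseteq> edges K \<union> {f}"
    and q: "is_path G q x y" "f = {x, y}" "(set q - f) \<inter> verts K' = {}"
    and disj: "\<And>e. e \<in> edges K' \<Longrightarrow> e \<noteq> f \<Longrightarrow> (set q - f) \<inter> (set (P e) - e) = {}"
  shows "path_system G K' (P(f := q))"
proof (rule path_systemI)
  fix e assume e: "e \<in> edges K'"
  show "\<exists>x y. e = {x, y} \<and> is_path G ((P(f := q)) e) x y"
  proof (cases "e = f")
    case False
    then have "e \<in> edges K" using K'(2) e by blast
    then show ?thesis using path_system_path[OF P] False by simp
  qed (use q(1,2) in auto)
  show "(set ((P(f := q)) e) - e) \<inter> verts K' = {}"
  proof (cases "e = f")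
    case False
    then have "e \<in> edges K" using K'(2) e by blast
    then have "(set (P e) - e) \<inter> verts K = {}" by (rule path_system_interior[OF P])
    then show ?thesis using K'(1) False by auto
  qed (use q(3) in simp)
next
  fix e e' assume e: "e \<in> edges K'" "e' \<in> edges K'" "e \<noteq> e'"
  show "(set ((P(f := q)) e) - e) \<inter> (set ((P(f := q)) e') - e') = {}"
  proof (cases "e = f \<or> e' = f")
    case True
    then show ?thesis using disj[OF e(1)] disj[OF e(2)] e(3) by (auto simp: Int_commute)
  next
    case False
    then have "e \<in> edges K" "e' \<in> edges K" using K'(2) e by blast+
    then show ?thesis using path_system_interiors_disjoint[OF P _ _ e(3)] False by simp
  qed
qed

lemma path_system_suppress:
  assumes K: "is_graph K" "path_system G K P" and uv: "{u, v} \<in> edges K" and vw: "{v, w} \<in> edges K"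
    and "u \<noteq> w" and K': "verts K' \<subseteq> verts K - {v}" "edges K' \<subseteq> {e \<in> edges K. v \<notin> e} \<union> {{u, w}}"
  shows "\<exists>P'. path_system G K' P'"
proof -
  obtain p where p: "is_path G p u v" "set p = set (P {u, v})" by (rule path_system_oriented_path[OF K(2) uv])
  obtain q where q: "is_path G q v w" "set q = set (P {v, w})" by (rule path_system_oriented_path[OF K(2) vw])
  have "u \<noteq> v" "v \<noteq> w" "v \<in> verts K" using graph_edge_ends[OF K(1) uv] graph_edge_ends[OF K(1) vw] by blast+
  then have "{u, v} \<noteq> {v, w}" "{u, v} \<inter> {v, w} = {v}" using \<open>u \<noteq> w\<close> by (auto simp: doubleton_eq_iff)
  then have "set p \<inter> set q = {v}" using path_system_inter[OF K uv vw] p(2) q(2) by simp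
  then have pq: "is_path G (p @ tl q) u w" "set (p @ tl q) = set p \<union> set q"
    using is_path_append[OF p(1) q(1)] by blast+
  let ?I = "\<lambda>e. set (P e) - e"
  have interior: "set (p @ tl q) - {u, w} \<subseteq> ?I {u, v} \<union> {v} \<union> ?I {v, w}"
    using pq(2) p(2) q(2) by auto
  have "path_system G K' (P({u, w} := p @ tl q))"
  proof (rule path_system_replace[OF K(2) _ _ pq(1) refl])
    show "verts K' \<subseteq> verts K" "edges K' \<subseteq> edges K \<union> {{u, w}}" using K' by blast+
    show "(set (p @ tl q) - {u, w}) \<inter> verts K' = {}"
      using interior K'(1) path_system_interior[OF K(2) uv] path_system_interior[OF K(2) vw] by blast
  next
    fix e assume "e \<in> edges K'" "e \<noteq> {u, w}"
    then have e: "e \<in> edges K" "v \<notin> e" using K'(2) by blast+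
    then have "e \<noteq> {u, v}" "e \<noteq> {v, w}" by auto
    then have "?I e \<inter> ?I {u, v} = {}" "?I e \<inter> ?I {v, w} = {}"
      using path_system_interiors_disjoint[OF K(2) e(1) uv] path_system_interiors_disjoint[OF K(2) e(1) vw]
      by simp_all
    moreover have "v \<notin> ?I e" using path_system_interior[OF K(2) e(1)] \<open>v \<in> verts K\<close> by blast
    ultimately show "(set (p @ tl q) - {u, w}) \<inter> ?I e = {}" using interior by blast
  qed
  then show ?thesis by blast
qed

lemma path_system_contract_low_degree:
  assumes K: "is_graph K" "path_system G K P" and v: "degree K v \<le> 2" "w \<in> nbrs K v"
  shows "\<exists>P'. path_system G (contract v w K) P'"
proof (cases rule: low_degree_nbrsE[OF K(1) v])
  case 1
  then have "edges (contract v w K) \<subseteq> edges K" unfolding edges_contract by blast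
  then have "path_system G (contract v w K) P" by (intro path_system_restrict[OF K(2)]) auto
  then show ?thesis by blast
next
  case (2 u)
  then have "u \<noteq> w" "{u, v} \<in> edges K" by (auto simp: nbrs_def)
  moreover have "{v, w} \<in> edges K" using v(2) by (simp add: in_nbrs_iff)
  moreover have "edges (contract v w K) \<subseteq> {e \<in> edges K. v \<notin> e} \<union> {{u, w}}"
    using 2 by (simp add: edges_contract)
  ultimately show ?thesis using path_system_suppress[OF K] by simp
qed

lemma reduce_step_path_system:
  assumes "reduce_step K K'" "is_graph K" "path_system G K P"
  shows "\<exists>P'. path_system G K' P'"
  using assms
proof (induction rule: reduce_step.induct)
  case (contract_step v K w)
  then have "w \<in> nbrs K v" by (simp add: in_nbrs_iff)
  then show ?case by (rule path_system_contract_low_degree[OF contract_step(5,6,2)])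
next
  case (delete_step v K)
  have "path_system G (verts K - {v}, edges K) P" by (rule path_system_restrict[OF delete_step(4)]) auto
  then show ?case by blast
qed

lemma reduce_steps_path_system:
  assumes "reduce_step\<^sup>*\<^sup>* G H" "is_graph G"
  shows "\<exists>P. path_system G H P"
  using assms(1)
proof (induction rule: rtranclp_induct)
  case base
  then show ?case using path_system_refl[OF assms(2)] .
next
  case (step K K')
  then obtain P where "path_system G K P" by blast
  then show ?case using reduce_step_path_system[OF step(2) reduce_steps_graph[OF step(1) assms(2)]] by blast
qed

lemma path_system_disjoint_paths:
  assumes K: "is_graph K" "path_system G K P" and "v \<in> verts K"
  shows "disjoint_paths_property G K v"
proof -
  have "\<exists>p. is_path G p v u \<and> set p = set (P {u, v})" if "u \<in> nbrs K v" for u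
    using that path_system_oriented_path[OF K(2), of v u] by (metis in_nbrs_iff insert_commute)
  then obtain Q where Q: "\<And>u. u \<in> nbrs K v \<Longrightarrow> is_path G (Q u) v u \<and> set (Q u) = set (P {u, v})"
    by metis
  have "set (Q u) \<inter> set (Q u') = {v}" if "u \<in> nbrs K v" "u' \<in> nbrs K v" "u \<noteq> u'" for u u'
  proof -
    have "{u, v} \<in> edges K" "{u', v} \<in> edges K" using that by (simp_all add: nbrs_def)
    moreover have "{u, v} \<noteq> {u', v}" "{u, v} \<inter> {u', v} = {v}" using that(3) by (auto simp: doubleton_eq_iff)
    ultimately show ?thesis using path_system_inter[OF K] Q[OF that(1)] Q[OF that(2)] by simp
  qed
  then show ?thesis unfolding disjoint_paths_property_def using Q by blast
qed

theorem theorem21: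
  fixes G H :: "'a graph"
  assumes "is_graph G"
    and "reduce_step\<^sup>*\<^sup>* G H"
    and "\<not> (\<exists>H'. reduce_step H H')"
  shows "canonical_minor_3_core G H"
proof -
  have H: "is_graph H" using reduce_steps_graph[OF assms(2,1)] .
  obtain P where "path_system G H P" using reduce_steps_path_system[OF assms(2,1)] by blast
  then have "\<forall>v \<in> verts H. disjoint_paths_property G H v" using path_system_disjoint_paths[OF H] by blast
  moreover have "min_deg_ge3 H" using reduce_terminal_min_deg[OF H assms(3)] .
  moreover have "minor H G" using reduce_steps_minor[OF assms(2,1)] .
  moreover have "card (edges M) \<le> card (edges H)" if "minor M G" "min_deg_ge3 M" for M
    using reduce_steps_maximal[OF assms(1,2) that] .
  ultimately show ?thesis unfolding canonical_minor_3_core_def minor_3_core_def by blast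
qed

end
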